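(* Assume (R) and let $n\ge1$ be odd. Then $A_n(x)=(2x-1)F_n(x(x-1))$, where for all $k\ge0$ $$(-1)^kf_{n,k}=[x^k]\,S_{n,2k}(x)=\frac1{k!}\frac{d^k}{dx^k}A^\star_{n,2k}(x)\Big|_{x=1}.$$ Here $S_{n,2k}(x)\in\mathbb C[[x]]$ for $0\le k\le d_n$ and $S_{n,2k}(x)\in\mathbb C[x]$ for $k>d_n$, in which case $S_{n,2k}$ is anti-palindromic: $S_{n,2k}(x)=-x^{2k}S_{n,2k}(x^{-1})$. The coefficients satisfy $f_{n,0}=-\alpha_n$, $f_{n,d_n}=\tfrac12\alpha_0$, $f_{n,k}=0$ for $k>d_n$, and for $0\le k\le n$ $$f_{n,k}=(-1)^k\sum_{\nu=0}^{k}\binom{2k-n}{k-\nu}s_{n,\nu}=(-1)^{k+1}\sum_{\nu=0}^{k}\binom{2k-\nu}{k}\binom{n}{\nu}\alpha_{n-\nu}.$$ For the even index $n+1$: $A_{n+1}(x)=F_{n+1}(x(x-1))$ with $f_{n+1,0}=\alpha_{n+1}$, $f_{n+1,k}=\frac{n+1}{k}f_{n,k-1}$ for $1\le k<d_{n+1}$, $f_{n+1,d_{n+1}}=\alpha_0$, and $f_{n+1,k}=0$ for $k>d_{n+1}$.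
   Context: Let $(\alpha_n)_{n\ge0}$ be an arbitrary sequence of complex numbers with Appell polynomials $A_n(x)=\sum_{\nu=0}^{n}\binom{n}{\nu}\alpha_{n-\nu}x^\nu$; property (R) means $A_n(1-x)=(-1)^nA_n(x)$ for all $n\ge0$. For $n\ge0,k\in\mathbb Z$ let $A^\star_{n,k}(x)=x^kA_n(x^{-1})$. Let $s_{n,k}=\sum_{\nu=k}^{n}\binom{n}{\nu}\binom{\nu}{k}\alpha_\nu$, $S_n(x)=\sum_{k=0}^n s_{n,k}x^k$, and the formal power series $S_{n,k}(x)=S_n(x)(x+1)^{k-n}=S_n(x)\sum_{\nu\ge0}\binom{k-n}{\nu}x^\nu$ (generalized binomial coefficients, also used in $\binom{2k-n}{k-\nu}$). $[x^k]$ denotes the coefficient of $x^k$. Let $d_n=\lfloor n/2\rfloor$, $\delta_n=1$ if $n$ odd, $0$ otherwise. Under (R), for each $n$ there is a unique polynomial $F_n(u)=\sum_{k\ge0}f_{n,k}u^k$ of degree at most $d_n$ with $A_n(x)=(2x-1)^{\delta_n}F_n(x(x-1))$ (explicitly $f_{n,k}=2^{2k-n}\sum_{\nu=0}^{d_n-k}\binom{n}{2\nu}\binom{d_n-\nu}{k}S_{2\nu}(1)$ for $k\le d_n$), with $f_{n,k}=0$ for $k>d_n$. *)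

theory Defs
  imports "HOL-Analysis.Analysis" "HOL-Computational_Algebra.Computational_Algebra"
begin

definition appell :: "(nat \<Rightarrow> complex) \<Rightarrow> nat \<Rightarrow> complex \<Rightarrow> complex" where
  "appell \<alpha> n x = (\<Sum>\<nu>\<le>n. of_nat (n choose \<nu>) * \<alpha> (n - \<nu>) * x ^ \<nu>)"

definition propR :: "(nat \<Rightarrow> complex) \<Rightarrow> bool" where
  "propR \<alpha> \<longleftrightarrow> (\<forall>n x. appell \<alpha> n (1 - x) = (-1) ^ n * appell \<alpha> n x)"

definition appell_star :: "(nat \<Rightarrow> complex) \<Rightarrow> nat \<Rightarrow> int \<Rightarrow> complex \<Rightarrow> complex" where
  "appell_star \<alpha> n k x = x powi k * appell \<alpha> n (inverse x)"

definition s_coef :: "(nat \<Rightarrow> complex) \<Rightarrow> nat \<Rightarrow> nat \<Rightarrow> complex" where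
  "s_coef \<alpha> n k = (\<Sum>\<nu>=k..n. of_nat (n choose \<nu>) * of_nat (\<nu> choose k) * \<alpha> \<nu>)"

definition S_poly :: "(nat \<Rightarrow> complex) \<Rightarrow> nat \<Rightarrow> complex poly" where
  "S_poly \<alpha> n = (\<Sum>k\<le>n. monom (s_coef \<alpha> n k) k)"

text \<open>S_{n,k}(x) = S_n(x) (1+x)^(k-n) as a formal power series
  (fps_binomial a = sum of (a gchoose j) X^j).\<close>
definition S_fps :: "(nat \<Rightarrow> complex) \<Rightarrow> nat \<Rightarrow> int \<Rightarrow> complex fps" where
  "S_fps \<alpha> n k = fps_of_poly (S_poly \<alpha> n) * fps_binomial (of_int (k - int n))"

definition F_pol :: "(nat \<Rightarrow> complex) \<Rightarrow> nat \<Rightarrow> complex poly" where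
  "F_pol \<alpha> n = (THE p. degree p \<le> n div 2 \<and>
     (\<forall>x. appell \<alpha> n x = (2 * x - 1) ^ (n mod 2) * poly p (x * (x - 1))))"

definition f_coef :: "(nat \<Rightarrow> complex) \<Rightarrow> nat \<Rightarrow> nat \<Rightarrow> complex" where
  "f_coef \<alpha> n k = coeff (F_pol \<alpha> n) k"

end

(*
  Property (R) says that A_n is invariant (n even) or anti-invariant (n odd) under the
  reflection x -> 1 - x. The invariant polynomials are exactly the polynomials in
  u = x(x - 1), and an anti-invariant one vanishes at 1/2, so it is (2x - 1) times an
  invariant one; this yields F_n with the stated degree bound, and comparing top and
  constant coefficients gives f_{n,0}, f_{n,d_n}. Differentiating A_{n+1} = F_{n+1}(u)
  with A_{n+1}' = (n + 1) A_n relates the even case to the odd one.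

  For the coefficient formulas, S_{n,m}(x) = (1 + x)^m A_n(z) with z = 1/(1 + x). Since
  2z - 1 = z(1 - x) and z(z - 1) = -x z^2, the j-th term of (1 + x)^{2k} A_n(z) is
  (-1)^j f_{n,j} x^j (1 - x)(1 + x)^{2(k - j) - 1}, whose coefficient of x^k vanishes
  unless j = k; this gives [x^k] S_{n,2k} = (-1)^k f_{n,k}. Applying (R) once more,
  A_n(z) = -A_n(1 - z) = -A_n(xz), which expands into the finite binomial sum. Finally
  [x^k] S_{n,m} is the k-th Taylor coefficient of x^m A_n(1/x) at 1, and for 2k > n the
  series S_{n,2k} is the polynomial (1 + x)^{2k} A_n(1/(1 + x)), anti-palindromic by (R).
*)
theory Submission
  imports Defs
begin

definition appell_poly :: "(nat \<Rightarrow> complex) \<Rightarrow> nat \<Rightarrow> complex poly" where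
  "appell_poly \<alpha> n = (\<Sum>\<nu>\<le>n. monom (of_nat (n choose \<nu>) * \<alpha> (n - \<nu>)) \<nu>)"

lemma poly_appell_poly [simp]: "poly (appell_poly \<alpha> n) x = appell \<alpha> n x"
  by (simp add: appell_poly_def appell_def poly_sum poly_monom)

lemma coeff_appell_poly:
  "coeff (appell_poly \<alpha> n) i = (if i \<le> n then of_nat (n choose i) * \<alpha> (n - i) else 0)"
  by (simp add: appell_poly_def coeff_sum coeff_monom)

lemma degree_appell_poly: "degree (appell_poly \<alpha> n) \<le> n"
  by (rule degree_le) (simp add: coeff_appell_poly)

lemma pderiv_appell_poly:
  "pderiv (appell_poly \<alpha> (Suc n)) = smult (of_nat (Suc n)) (appell_poly \<alpha> n)"
proof (rule poly_eqI)
  fix i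
  have "(of_nat (Suc i) :: complex) * of_nat (Suc n choose Suc i) = of_nat (Suc n) * of_nat (n choose i)"
    by (metis Suc_times_binomial of_nat_mult)
  then show "coeff (pderiv (appell_poly \<alpha> (Suc n))) i = coeff (smult (of_nat (Suc n)) (appell_poly \<alpha> n)) i"
    by (simp add: coeff_pderiv coeff_appell_poly mult_ac)
qed

lemma appell_poly_reflect:
  assumes "propR \<alpha>"
  shows "appell_poly \<alpha> n \<circ>\<^sub>p [:1, -1:] = smult ((-1) ^ n) (appell_poly \<alpha> n)"
  using assms by (intro poly_eq_poly_eq_iff[THEN iffD1] ext) (simp add: poly_pcompose propR_def)

lemma degree_pcompose_x_sq_minus_x:
  "degree (p \<circ>\<^sub>p [:0, -1, 1 :: 'a::idom:]) = 2 * degree p"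
  by (simp add: degree_pcompose)

lemma pcompose_x_sq_minus_x_eq_iff:
  fixes p q :: "'a::idom poly"
  shows "p \<circ>\<^sub>p [:0, -1, 1:] = q \<circ>\<^sub>p [:0, -1, 1:] \<longleftrightarrow> p = q"
proof
  assume "p \<circ>\<^sub>p [:0, -1, 1:] = q \<circ>\<^sub>p [:0, -1, 1:]"
  then have "(p - q) \<circ>\<^sub>p [:0, -1, 1:] = 0"
    by (simp add: pcompose_diff)
  then show "p = q"
    using pcompose_eq_0[of "p - q" "[:0, -1, 1:]"] by simp
qed simp

lemma reflection_invariant_pcompose:
  fixes p :: "'a::field poly"
  assumes "p \<circ>\<^sub>p [:1, -1:] = p"
  shows "\<exists>F. p = F \<circ>\<^sub>p [:0, -1, 1:]"
  using assms
proof (induction "degree p" arbitrary: p rule: less_induct)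
  case less
  define U :: "'a poly" where "U = [:0, -1, 1:]"
  have U0: "U \<noteq> 0" and degU: "degree U = 2" and U_refl: "U \<circ>\<^sub>p [:1, -1:] = U"
    by (simp_all add: U_def pcompose_pCons algebra_simps)
  define Q where "Q = p div U"
  define c where "c = coeff (p mod U) 0"
  define b where "b = coeff (p mod U) 1"
  have "degree (p mod U) < 2"
    using degree_mod_less'[OF U0, of p] degU by (cases "p mod U = 0") auto
  then have "p mod U = [:c, b:]"
    unfolding c_def b_def by (intro poly_eqI) (auto simp: coeff_pCons coeff_eq_0 split: nat.splits)
  then have pQ: "p = Q * U + [:c, b:]"
    unfolding Q_def by (metis div_mult_mod_eq)
  have "poly p 1 = poly p 0"
    using arg_cong[OF less.prems, of "\<lambda>p. poly p 0"] by (simp add: poly_pcompose)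
  then have "b = 0"
    unfolding pQ by (simp add: U_def)
  with pQ have pQ: "p = Q * U + [:c:]"
    by simp
  have "p \<circ>\<^sub>p [:1, -1:] = Q \<circ>\<^sub>p [:1, -1:] * U + [:c:]"
    by (subst pQ) (simp add: pcompose_add pcompose_mult U_refl)
  then have "Q \<circ>\<^sub>p [:1, -1:] * U = Q * U"
    using less.prems pQ by simp
  then have Q_refl: "Q \<circ>\<^sub>p [:1, -1:] = Q"
    using U0 by simp
  show ?case
  proof (cases "Q = 0")
    case True
    then show ?thesis
      using pQ by (intro exI[of _ "[:c:]"]) simp
  next
    case False
    then have "degree p = degree Q + 2"
      using pQ degU U0 by (simp add: degree_add_eq_left degree_mult_eq)
    then obtain G where "Q = G \<circ>\<^sub>p U"
      using less.hyps[OF _ Q_refl] unfolding U_def by auto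
    then show ?thesis
      using pQ by (intro exI[of _ "pCons c G"]) (simp add: U_def pcompose_pCons algebra_simps)
  qed
qed

lemma reflection_anti_invariant_pcompose:
  fixes p :: "'a::field_char_0 poly"
  assumes "p \<circ>\<^sub>p [:1, -1:] = - p"
  shows "\<exists>F. p = [:-1, 2:] * (F \<circ>\<^sub>p [:0, -1, 1:])"
proof -
  have "poly p (1/2) = - poly p (1/2)"
    using arg_cong[OF assms, of "\<lambda>q. poly q (1/2)"] by (simp add: poly_pcompose)
  then have "[:-(1/2), 1:] dvd p"
    by (simp add: poly_eq_0_iff_dvd)
  then obtain q where "p = [:-(1/2), 1:] * q" ..
  then have "p = [:-1, 2:] * smult (1/2) q"
    by (simp add: poly_eq_poly_eq_iff[symmetric] algebra_simps)
  then obtain B where pB: "p = [:-1, 2:] * B" ..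
  have "p \<circ>\<^sub>p [:1, -1:] = ([:-1, 2:] \<circ>\<^sub>p [:1, -1:]) * (B \<circ>\<^sub>p [:1, -1:])"
    unfolding pB by (rule pcompose_mult)
  also have "[:-1, 2:] \<circ>\<^sub>p [:1, -1:] = - [:-1, 2 :: 'a:]"
    by (simp add: pcompose_pCons)
  finally have "[:-1, 2:] * (B \<circ>\<^sub>p [:1, -1:]) = [:-1, 2:] * B"
    using assms pB by (metis minus_mult_left neg_equal_iff_equal)
  then have "B \<circ>\<^sub>p [:1, -1:] = B"
    by (subst (asm) mult_left_cancel) simp_all
  then show ?thesis
    using pB reflection_invariant_pcompose by blast
qed

lemma F_pol_eqI:
  assumes "degree F \<le> n div 2"
    and "\<And>x. appell \<alpha> n x = (2 * x - 1) ^ (n mod 2) * poly F (x * (x - 1))"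
  shows "F_pol \<alpha> n = F"
  unfolding F_pol_def
proof (rule the_equality)
  show "degree F \<le> n div 2 \<and> (\<forall>x. appell \<alpha> n x = (2 * x - 1) ^ (n mod 2) * poly F (x * (x - 1)))"
    using assms by blast
next
  fix p
  assume p: "degree p \<le> n div 2 \<and> (\<forall>x. appell \<alpha> n x = (2 * x - 1) ^ (n mod 2) * poly p (x * (x - 1)))"
  have "poly ([:-1, 2:] ^ (n mod 2) * (p \<circ>\<^sub>p [:0, -1, 1:])) x = poly ([:-1, 2:] ^ (n mod 2) * (F \<circ>\<^sub>p [:0, -1, 1:])) x"
    for x using p assms(2)[of x] by (simp add: poly_pcompose algebra_simps)
  then have "[:-1, 2:] ^ (n mod 2) * (p \<circ>\<^sub>p [:0, -1, 1:]) = [:-1, 2:] ^ (n mod 2) * (F \<circ>\<^sub>p [:0, -1, 1:])"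
    by (intro poly_eq_poly_eq_iff[THEN iffD1] ext)
  then show "p = F"
    by (simp add: pcompose_x_sq_minus_x_eq_iff)
qed

lemma appell_poly_odd_F_pol:
  assumes "propR \<alpha>" "odd n"
  shows "appell_poly \<alpha> n = [:-1, 2:] * (F_pol \<alpha> n \<circ>\<^sub>p [:0, -1, 1:])"
    and "degree (F_pol \<alpha> n) \<le> n div 2"
proof -
  have "appell_poly \<alpha> n \<circ>\<^sub>p [:1, -1:] = - appell_poly \<alpha> n"
    using appell_poly_reflect[OF assms(1), of n] assms(2) by simp
  then obtain F where F: "appell_poly \<alpha> n = [:-1, 2:] * (F \<circ>\<^sub>p [:0, -1, 1:])"
    using reflection_anti_invariant_pcompose by blast
  have "2 * degree F + 1 \<le> n"
  proof (cases "F = 0")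
    case False
    then have "degree (appell_poly \<alpha> n) = 2 * degree F + 1"
      unfolding F by (subst degree_mult_eq) (simp_all add: degree_pcompose_x_sq_minus_x pcompose_eq_0_iff)
    then show ?thesis
      using degree_appell_poly by metis
  qed (use assms(2) odd_pos in fastforce)
  then have deg: "degree F \<le> n div 2"
    by linarith
  have "F_pol \<alpha> n = F"
  proof (rule F_pol_eqI[OF deg])
    show "appell \<alpha> n x = (2 * x - 1) ^ (n mod 2) * poly F (x * (x - 1))" for x
      using arg_cong[OF F, of "\<lambda>p. poly p x"] assms(2) by (simp add: poly_pcompose odd_iff_mod_2_eq_one algebra_simps)
  qed
  with F deg show "appell_poly \<alpha> n = [:-1, 2:] * (F_pol \<alpha> n \<circ>\<^sub>p [:0, -1, 1:])"
    and "degree (F_pol \<alpha> n) \<le> n div 2"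
    by simp_all
qed

lemma appell_poly_even_F_pol:
  assumes "propR \<alpha>" "even n"
  shows "appell_poly \<alpha> n = F_pol \<alpha> n \<circ>\<^sub>p [:0, -1, 1:]"
    and "degree (F_pol \<alpha> n) \<le> n div 2"
proof -
  have "appell_poly \<alpha> n \<circ>\<^sub>p [:1, -1:] = appell_poly \<alpha> n"
    using appell_poly_reflect[OF assms(1), of n] assms(2) by simp
  then obtain F where F: "appell_poly \<alpha> n = F \<circ>\<^sub>p [:0, -1, 1:]"
    using reflection_invariant_pcompose by blast
  have deg: "degree F \<le> n div 2"
    using degree_appell_poly[of \<alpha> n] by (simp add: F degree_pcompose_x_sq_minus_x)
  have "F_pol \<alpha> n = F"
  proof (rule F_pol_eqI[OF deg])
    show "appell \<alpha> n x = (2 * x - 1) ^ (n mod 2) * poly F (x * (x - 1))" for x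
      using arg_cong[OF F, of "\<lambda>p. poly p x"] assms(2) by (simp add: poly_pcompose algebra_simps)
  qed
  with F deg show "appell_poly \<alpha> n = F_pol \<alpha> n \<circ>\<^sub>p [:0, -1, 1:]"
    and "degree (F_pol \<alpha> n) \<le> n div 2"
    by simp_all
qed

(* Unlike fps_compose, this allows arguments with nonzero constant term, such as 1/(1 + x). *)
definition fps_eval :: "'a::comm_ring_1 poly \<Rightarrow> 'a fps \<Rightarrow> 'a fps" where
  "fps_eval p z = poly (map_poly fps_const p) z"

lemma fps_const_sum: "fps_const (sum f A) = (\<Sum>x\<in>A. fps_const (f x))"
  by (induction A rule: infinite_finite_induct) (simp_all flip: fps_const_add)

lemma fps_eval_pCons [simp]: "fps_eval (pCons a p) z = fps_const a + z * fps_eval p z"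
  by (simp add: fps_eval_def map_poly_pCons)

lemma fps_eval_0 [simp]: "fps_eval 0 z = 0"
  by (simp add: fps_eval_def)

lemma fps_eval_add: "fps_eval (p + q) z = fps_eval p z + fps_eval q z"
proof -
  have "map_poly fps_const (p + q) = map_poly fps_const p + map_poly fps_const q"
    by (intro poly_eqI) (simp add: coeff_map_poly)
  then show ?thesis
    by (simp add: fps_eval_def)
qed

lemma fps_eval_mult: "fps_eval (p * q) z = fps_eval p z * fps_eval q z"
proof -
  have "map_poly fps_const (p * q) = map_poly fps_const p * map_poly fps_const q"
    by (intro poly_eqI) (simp add: coeff_map_poly coeff_mult fps_const_sum)
  then show ?thesis
    by (simp add: fps_eval_def)
qed

lemma fps_eval_smult: "fps_eval (smult c p) z = fps_const c * fps_eval p z"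
  using fps_eval_mult[of "[:c:]" p z] by simp

lemma fps_eval_uminus: "fps_eval (- p) z = - fps_eval p z"
  using fps_eval_smult[of "-1" p z] by (simp flip: fps_const_neg)

lemma fps_eval_pcompose: "fps_eval (p \<circ>\<^sub>p q) z = fps_eval p (fps_eval q z)"
  by (induction p rule: pCons_induct) (simp_all add: pcompose_pCons fps_eval_add fps_eval_mult)

lemma fps_eval_sum: "fps_eval (sum f A) z = (\<Sum>x\<in>A. fps_eval (f x) z)"
  by (induction A rule: infinite_finite_induct) (simp_all add: fps_eval_add)

lemma fps_eval_monom: "fps_eval (monom c n) z = fps_const c * z ^ n"
  by (simp add: fps_eval_def map_poly_monom poly_monom)

lemma fps_eval_altdef: "fps_eval p z = (\<Sum>i\<le>degree p. fps_const (coeff p i) * z ^ i)"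
  by (subst (1) poly_as_sum_of_monoms[symmetric]) (simp add: fps_eval_sum fps_eval_monom)

lemma fps_eval_appell_poly:
  "fps_eval (appell_poly \<alpha> n) z = (\<Sum>\<nu>\<le>n. fps_const (of_nat (n choose \<nu>) * \<alpha> (n - \<nu>)) * z ^ \<nu>)"
  by (simp add: appell_poly_def fps_eval_sum fps_eval_monom)

lemma fps_eval_appell_poly_reflect:
  assumes "propR \<alpha>" and "odd n"
  shows "fps_eval (appell_poly \<alpha> n) (1 - z) = - fps_eval (appell_poly \<alpha> n) z"
  using arg_cong[OF appell_poly_reflect[OF assms(1), of n], of "\<lambda>p. fps_eval p z"] assms(2)
  by (simp add: fps_eval_pcompose fps_eval_uminus flip: fps_const_neg)

lemma fps_eval_odd_decomp:
  "fps_eval ([:-1, 2:] * (F \<circ>\<^sub>p [:0, -1, 1:])) z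
     = (\<Sum>j\<le>degree F. fps_const (coeff F j) * ((2 * z - 1) * (z * (z - 1)) ^ j))"
  unfolding fps_eval_mult fps_eval_pcompose fps_eval_altdef[of F]
  by (simp add: sum_distrib_left numeral_fps_const algebra_simps flip: fps_const_neg)

lemma coeff_S_poly: "coeff (S_poly \<alpha> n) i = s_coef \<alpha> n i"
  by (cases "i \<le> n") (simp_all add: S_poly_def coeff_sum coeff_monom s_coef_def)

lemma fps_of_S_poly:
  "fps_of_poly (S_poly \<alpha> n) = (\<Sum>j\<le>n. fps_const (of_nat (n choose j) * \<alpha> j) * fps_binomial (of_nat j))"
proof (rule fps_ext)
  fix i
  have "(\<Sum>j\<le>n. of_nat (n choose j) * \<alpha> j * of_nat (j choose i)) = (\<Sum>j=i..n. of_nat (n choose j) * \<alpha> j * (of_nat (j choose i) :: complex))"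
    by (rule sum.mono_neutral_right) auto
  then show "fps_of_poly (S_poly \<alpha> n) $ i = (\<Sum>j\<le>n. fps_const (of_nat (n choose j) * \<alpha> j) * fps_binomial (of_nat j)) $ i"
    by (simp add: coeff_S_poly s_coef_def fps_sum_nth binomial_gbinomial mult_ac)
qed

lemma S_fps_nth: "S_fps \<alpha> n m $ k = (\<Sum>\<nu>\<le>k. (of_int (m - int n) gchoose (k - \<nu>)) * s_coef \<alpha> n \<nu>)"
  by (simp add: S_fps_def fps_mult_nth atMost_atLeast0 coeff_S_poly mult_ac)

lemma S_fps_sum:
  "S_fps \<alpha> n m = (\<Sum>\<nu>\<le>n. fps_const (of_nat (n choose \<nu>) * \<alpha> (n - \<nu>)) * fps_binomial (of_int m - of_nat \<nu>))"
proof -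
  have "S_fps \<alpha> n m = (\<Sum>j\<le>n. fps_const (of_nat (n choose j) * \<alpha> j) * fps_binomial (of_int m - of_nat (n - j)))"
    unfolding S_fps_def fps_of_S_poly sum_distrib_right
    by (intro sum.cong refl) (simp add: mult.assoc of_nat_diff algebra_simps flip: fps_binomial_add_mult)
  also have "\<dots> = (\<Sum>\<nu>\<le>n. fps_const (of_nat (n choose (n - \<nu>)) * \<alpha> (n - \<nu>)) * fps_binomial (of_int m - of_nat (n - (n - \<nu>))))"
    by (rule sum.reindex_bij_witness[of _ "\<lambda>j. n - j" "\<lambda>j. n - j"]) auto
  also have "\<dots> = (\<Sum>\<nu>\<le>n. fps_const (of_nat (n choose \<nu>) * \<alpha> (n - \<nu>)) * fps_binomial (of_int m - of_nat \<nu>))"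
    by (intro sum.cong refl) (simp flip: binomial_symmetric)
  finally show ?thesis .
qed

lemma S_fps_eq_fps_eval:
  "S_fps \<alpha> n m = fps_binomial (of_int m) * fps_eval (appell_poly \<alpha> n) (fps_binomial (-1))"
  unfolding S_fps_sum fps_eval_appell_poly sum_distrib_left fps_binomial_power
  by (intro sum.cong refl) (simp add: mult.left_commute flip: fps_binomial_add_mult)

lemma fps_nth_sum_coeff_X_power:
  fixes F :: "'a::comm_ring_1 poly" and G :: "nat \<Rightarrow> 'a fps"
  assumes "\<And>j. j \<le> k \<Longrightarrow> G j $ (k - j) = (if j = k then c else 0)"
  shows "(\<Sum>j\<le>degree F. fps_const (coeff F j) * (fps_X ^ j * G j)) $ k = c * coeff F k"
proof -
  have "(fps_const (coeff F j) * (fps_X ^ j * G j)) $ k = (if j = k then c * coeff F k else 0)" for j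
    using assms[of j] by (cases "j \<le> k") (auto simp: fps_X_power_mult_nth)
  then show ?thesis
    by (auto simp: fps_sum_nth coeff_eq_0)
qed

lemma fps_nth_one_minus_X_binomial:
  "((1 - fps_X) * fps_binomial (2 * of_nat t - 1 :: 'a::field_char_0)) $ t = (if t = 0 then 1 else 0)"
proof (cases t)
  case (Suc u)
  have "(2 * of_nat t - 1 :: 'a) = of_nat (2 * u + 1)"
    using Suc by simp
  moreover have "(2 * u + 1) choose Suc u = (2 * u + 1) choose u"
    by (subst binomial_symmetric) auto
  ultimately show ?thesis
    using Suc by (simp add: left_diff_distrib binomial_gbinomial[symmetric] del: of_nat_Suc of_nat_add of_nat_mult)
qed simp

lemma one_minus_fps_X_mult_fps_binomial_minus_one:
  "1 - fps_X * fps_binomial (-1) = fps_binomial (-1 :: 'a::field_char_0)"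
proof -
  have "fps_binomial (-1) * (1 + fps_X) = (1 :: 'a fps)"
    by (simp flip: fps_binomial_1 fps_binomial_add_mult)
  then show ?thesis
    by (simp add: algebra_simps)
qed

lemma S_fps_diag_coeff:
  assumes "propR \<alpha>" and "odd n"
  shows "S_fps \<alpha> n (2 * int k) $ k = (-1) ^ k * f_coef \<alpha> n k"
proof -
  define z :: "complex fps" where "z = fps_binomial (-1)"
  have z1: "z - 1 = - (fps_X * z)"
    unfolding z_def by (subst (1) one_minus_fps_X_mult_fps_binomial_minus_one[symmetric]) simp
  have "2 * z - 1 = z + (z - 1)"
    by (simp add: algebra_simps)
  also have "\<dots> = z * (1 - fps_X)"
    by (simp add: z1 algebra_simps)
  finally have lin: "2 * z - 1 = z * (1 - fps_X)" .
  have quad: "z * (z - 1) = - (fps_X * z ^ 2)"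
    by (simp add: z1 power2_eq_square mult_ac)
  have summand: "fps_binomial (of_int (2 * int k)) * ((2 * z - 1) * (z * (z - 1)) ^ j)
      = fps_X ^ j * (fps_const ((-1) ^ j) * ((1 - fps_X) * fps_binomial (2 * (of_nat k - of_nat j) - 1)))" for j
  proof -
    have "fps_binomial (of_int (2 * int k)) * z ^ (2 * j + 1) = fps_binomial (2 * (of_nat k - of_nat j) - 1)"
      unfolding z_def fps_binomial_power fps_binomial_add_mult[symmetric] by (simp add: algebra_simps)
    moreover have "(2 * z - 1) * (z * (z - 1)) ^ j = fps_const ((-1) ^ j) * (fps_X ^ j * ((1 - fps_X) * z ^ (2 * j + 1)))"
      unfolding lin quad by (simp add: power_minus' power_mult_distrib mult_ac flip: fps_const_neg fps_const_power power_mult)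
    ultimately show ?thesis
      by (simp add: mult_ac)
  qed
  have "S_fps \<alpha> n (2 * int k) = (\<Sum>j\<le>degree (F_pol \<alpha> n). fps_const (coeff (F_pol \<alpha> n) j) *
      (fps_X ^ j * (fps_const ((-1) ^ j) * ((1 - fps_X) * fps_binomial (2 * (of_nat k - of_nat j) - 1)))))"
    unfolding S_fps_eq_fps_eval appell_poly_odd_F_pol(1)[OF assms] fps_eval_odd_decomp sum_distrib_left
    by (intro sum.cong refl) (metis z_def summand mult.left_commute)
  also have "\<dots> $ k = (-1) ^ k * coeff (F_pol \<alpha> n) k"
  proof (rule fps_nth_sum_coeff_X_power)
    fix j assume "j \<le> k"
    then have "2 * (of_nat k - of_nat j) - 1 = 2 * of_nat (k - j) - (1 :: complex)"
      by (simp add: of_nat_diff)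
    then show "(fps_const ((-1) ^ j) * ((1 - fps_X) * fps_binomial (2 * (of_nat k - of_nat j) - 1 :: complex))) $ (k - j)
        = (if j = k then (-1) ^ k else 0)"
      using \<open>j \<le> k\<close> by (simp only: fps_mult_left_const_nth fps_nth_one_minus_X_binomial) simp
  qed
  finally show ?thesis
    by (simp add: f_coef_def)
qed

lemma S_fps_diag_coeff_choose:
  assumes "propR \<alpha>" and "odd n"
  shows "S_fps \<alpha> n (2 * int k) $ k
    = - (\<Sum>\<nu>\<le>k. of_nat ((2 * k - \<nu>) choose k) * of_nat (n choose \<nu>) * \<alpha> (n - \<nu>))"
proof -
  define z :: "complex fps" where "z = fps_binomial (-1)"
  define c where "c \<nu> = of_nat (n choose \<nu>) * \<alpha> (n - \<nu>)" for \<nu>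
  define t where "t \<nu> = c \<nu> * (fps_X ^ \<nu> * fps_binomial (of_nat (2 * k) - of_nat \<nu>)) $ k" for \<nu>
  have "S_fps \<alpha> n (2 * int k) = fps_binomial (of_nat (2 * k)) * fps_eval (appell_poly \<alpha> n) (1 - fps_X * z)"
    by (simp add: S_fps_eq_fps_eval z_def one_minus_fps_X_mult_fps_binomial_minus_one)
  also have "\<dots> = - (fps_binomial (of_nat (2 * k)) * fps_eval (appell_poly \<alpha> n) (fps_X * z))"
    by (simp add: fps_eval_appell_poly_reflect[OF assms])
  also have "\<dots> = - (\<Sum>\<nu>\<le>n. fps_const (c \<nu>) * (fps_X ^ \<nu> * fps_binomial (of_nat (2 * k) - of_nat \<nu>)))"
    unfolding fps_eval_appell_poly sum_distrib_left c_def
    by (intro arg_cong[of _ _ uminus] sum.cong refl)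
      (simp add: z_def power_mult_distrib fps_binomial_power mult_ac flip: fps_binomial_add_mult)
  finally have "S_fps \<alpha> n (2 * int k) $ k = - (\<Sum>\<nu>\<le>n. t \<nu>)"
    by (simp add: t_def fps_sum_nth)
  also have "(\<Sum>\<nu>\<le>n. t \<nu>) = (\<Sum>\<nu>\<le>max n k. t \<nu>)"
    by (rule sum.mono_neutral_left) (auto simp: t_def c_def)
  also have "\<dots> = (\<Sum>\<nu>\<le>k. t \<nu>)"
    by (rule sum.mono_neutral_right) (auto simp: t_def fps_X_power_mult_nth)
  also have "\<dots> = (\<Sum>\<nu>\<le>k. of_nat ((2 * k - \<nu>) choose k) * of_nat (n choose \<nu>) * \<alpha> (n - \<nu>))"
  proof (intro sum.cong refl)
    fix \<nu> assume "\<nu> \<in> {..k}"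
    then have sym: "(2 * k - \<nu>) choose (k - \<nu>) = (2 * k - \<nu>) choose k"
      by (subst binomial_symmetric) auto
    have "t \<nu> = c \<nu> * ((of_nat (2 * k - \<nu>) :: complex) gchoose (k - \<nu>))"
      using \<open>\<nu> \<in> {..k}\<close> by (simp add: t_def fps_X_power_mult_nth of_nat_diff)
    also have "\<dots> = c \<nu> * of_nat ((2 * k - \<nu>) choose k)"
      by (simp add: sym flip: binomial_gbinomial)
    finally show "t \<nu> = of_nat ((2 * k - \<nu>) choose k) * of_nat (n choose \<nu>) * \<alpha> (n - \<nu>)"
      by (simp add: c_def)
  qed
  finally show ?thesis .
qed

lemma higher_deriv_power_int_sum:
  fixes c :: "'b \<Rightarrow> complex" and e :: "'b \<Rightarrow> int"
  assumes "finite A" and "\<And>x. x \<noteq> 0 \<Longrightarrow> g x = (\<Sum>\<nu>\<in>A. c \<nu> * x powi e \<nu>)" and "x \<noteq> 0"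
  shows "(deriv ^^ j) g x = (\<Sum>\<nu>\<in>A. c \<nu> * (fact j * (of_int (e \<nu>) gchoose j)) * x powi (e \<nu> - int j))"
  using assms(3)
proof (induction j arbitrary: x)
  case 0
  then show ?case
    using assms(2) by simp
next
  case (Suc j)
  define h where "h x = (\<Sum>\<nu>\<in>A. c \<nu> * (fact j * (of_int (e \<nu>) gchoose j)) * x powi (e \<nu> - int j))" for x
  have "eventually (\<lambda>y. y \<in> -{0}) (nhds x)"
    using Suc.prems by (intro eventually_nhds_in_open) auto
  then have "eventually (\<lambda>y. (deriv ^^ j) g y = h y) (nhds x)"
    by eventually_elim (use Suc.IH in \<open>auto simp: h_def\<close>)
  then have "(deriv ^^ Suc j) g x = deriv h x"
    by (simp add: deriv_cong_ev)
  also have "\<dots> = (\<Sum>\<nu>\<in>A. c \<nu> * (fact j * (of_int (e \<nu>) gchoose j)) * (of_int (e \<nu> - int j) * x powi (e \<nu> - int j - 1)))"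
    unfolding h_def using Suc.prems
    by (intro DERIV_imp_deriv DERIV_sum DERIV_cmult DERIV_power_int[OF DERIV_ident, simplified]) simp
  also have "\<dots> = (\<Sum>\<nu>\<in>A. c \<nu> * (fact (Suc j) * (of_int (e \<nu>) gchoose Suc j)) * x powi (e \<nu> - int (Suc j)))"
  proof (intro sum.cong refl)
    fix \<nu>
    have "fact j * (of_int (e \<nu>) gchoose j) * (of_int (e \<nu>) - of_nat j) = fact (Suc j) * (of_int (e \<nu>) gchoose Suc j :: complex)"
      using gbinomial_mult_1[of "of_int (e \<nu>) :: complex" j] by (simp add: algebra_simps)
    moreover have "of_int (e \<nu> - int j) = (of_int (e \<nu>) - of_nat j :: complex)" and "e \<nu> - int j - 1 = e \<nu> - int (Suc j)"
      by simp_all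
    ultimately show "c \<nu> * (fact j * (of_int (e \<nu>) gchoose j)) * (of_int (e \<nu> - int j) * x powi (e \<nu> - int j - 1))
      = c \<nu> * (fact (Suc j) * (of_int (e \<nu>) gchoose Suc j)) * x powi (e \<nu> - int (Suc j))"
      by (metis mult.assoc)
  qed
  finally show ?case .
qed

lemma appell_star_eq_sum:
  assumes "x \<noteq> 0"
  shows "appell_star \<alpha> n m x = (\<Sum>\<nu>\<le>n. of_nat (n choose \<nu>) * \<alpha> (n - \<nu>) * x powi (m - int \<nu>))"
proof -
  have "x powi m * inverse x ^ \<nu> = x powi (m - int \<nu>)" for \<nu>
    using assms by (simp add: power_int_diff power_inverse field_simps)
  then show ?thesis
    unfolding appell_star_def appell_def sum_distrib_left by (intro sum.cong refl) (simp add: mult_ac)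
qed

lemma higher_deriv_appell_star_at_1:
  "(deriv ^^ k) (appell_star \<alpha> n m) 1 / fact k = S_fps \<alpha> n m $ k"
proof -
  have "(deriv ^^ k) (appell_star \<alpha> n m) 1
      = (\<Sum>\<nu>\<le>n. of_nat (n choose \<nu>) * \<alpha> (n - \<nu>) * (fact k * (of_int (m - int \<nu>) gchoose k)) * 1 powi (m - int \<nu> - int k))"
    by (rule higher_deriv_power_int_sum) (auto simp: appell_star_eq_sum)
  then show ?thesis
    by (simp add: S_fps_sum fps_sum_nth sum_divide_distrib mult.assoc)
qed

lemma poly_S_poly: "poly (S_poly \<alpha> n) w = (\<Sum>j\<le>n. of_nat (n choose j) * \<alpha> j * (1 + w) ^ j)"
proof -
  have "S_poly \<alpha> n = (\<Sum>j\<le>n. smult (of_nat (n choose j) * \<alpha> j) ([:1, 1:] ^ j))"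
    by (simp add: fps_of_poly_eq_iff[symmetric] fps_of_S_poly fps_of_poly_sum fps_of_poly_smult
        fps_of_poly_power fps_of_poly_linear' fps_binomial_of_nat)
  then show ?thesis
    by (simp add: poly_sum algebra_simps)
qed

lemma poly_S_poly_eq_appell:
  assumes "1 + w \<noteq> 0"
  shows "poly (S_poly \<alpha> n) w = (1 + w) ^ n * appell \<alpha> n (inverse (1 + w))"
proof -
  have "(1 + w) ^ n * appell \<alpha> n (inverse (1 + w)) = (\<Sum>\<nu>\<le>n. of_nat (n choose \<nu>) * \<alpha> (n - \<nu>) * (1 + w) ^ (n - \<nu>))"
    unfolding appell_def sum_distrib_left
    by (intro sum.cong refl) (simp add: assms power_diff power_inverse field_simps)
  also have "\<dots> = (\<Sum>j\<le>n. of_nat (n choose j) * \<alpha> j * (1 + w) ^ j)"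
    by (rule sum.reindex_bij_witness[of _ "\<lambda>j. n - j" "\<lambda>j. n - j"]) (auto simp flip: binomial_symmetric)
  finally show ?thesis
    by (simp add: poly_S_poly)
qed

lemma S_fps_antipalindromic:
  assumes R: "propR \<alpha>" and "odd n" and "n div 2 < k"
  shows "\<exists>p. fps_of_poly p = S_fps \<alpha> n (2 * int k)
    \<and> (\<forall>x. x \<noteq> 0 \<longrightarrow> poly p x = - (x ^ (2 * k) * poly p (inverse x)))"
proof -
  define m where "m = 2 * k - n"
  have nm: "n + m = 2 * k" and "m \<ge> 1"
    using assms(2,3) unfolding m_def by (auto elim!: oddE)
  define p where "p = S_poly \<alpha> n * [:1, 1:] ^ m"
  have "fps_of_poly p = S_fps \<alpha> n (2 * int k)"
  proof -
    have "(of_int (2 * int k - int n) :: complex) = of_nat m"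
      using nm by (simp add: m_def of_nat_diff)
    then show ?thesis
      unfolding p_def S_fps_def
      by (simp add: fps_of_poly_mult fps_of_poly_power fps_of_poly_linear' fps_binomial_of_nat)
  qed
  moreover have p_eq: "poly p w = (1 + w) ^ (2 * k) * appell \<alpha> n (inverse (1 + w))" if "1 + w \<noteq> 0" for w
    unfolding p_def nm[symmetric] power_add
    by (simp add: poly_S_poly_eq_appell[OF that] algebra_simps)
  have "poly p x = - (x ^ (2 * k) * poly p (inverse x))" if "x \<noteq> 0" for x
  proof (cases "x = -1")
    case True
    then show ?thesis
      using \<open>m \<ge> 1\<close> by (simp add: p_def)
  next
    case False
    define y where "y = 1 + x"
    have "y \<noteq> 0"
      using False by (auto simp: y_def add_eq_0_iff)
    moreover have "1 + inverse x = y / x" and "x * (1 + inverse x) = y"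
      using False \<open>x \<noteq> 0\<close> by (auto simp: y_def field_simps)
    ultimately have "1 + inverse x \<noteq> 0" and "inverse (1 + inverse x) = 1 - inverse y"
      using \<open>x \<noteq> 0\<close> by (auto simp: y_def field_simps)
    moreover have "appell \<alpha> n (1 - inverse y) = - appell \<alpha> n (inverse y)"
      using R \<open>odd n\<close> unfolding propR_def by simp
    ultimately have "x ^ (2 * k) * poly p (inverse x) = - (y ^ (2 * k) * appell \<alpha> n (inverse y))"
      using \<open>x * (1 + inverse x) = y\<close> by (simp add: p_eq mult.assoc[symmetric] flip: power_mult_distrib)
    moreover have "poly p x = y ^ (2 * k) * appell \<alpha> n (inverse y)"
      using p_eq \<open>y \<noteq> 0\<close> by (simp add: y_def)
    ultimately show ?thesis
      by simp
  qed
  ultimately show ?thesis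
    by blast
qed

lemma degree_F_pol:
  assumes "propR \<alpha>"
  shows "degree (F_pol \<alpha> n) \<le> n div 2"
  using appell_poly_odd_F_pol(2)[OF assms] appell_poly_even_F_pol(2)[OF assms] by blast

lemma f_coef_eq_0:
  assumes "propR \<alpha>" and "n div 2 < k"
  shows "f_coef \<alpha> n k = 0"
  using degree_F_pol[OF assms(1), of n] assms(2) by (simp add: f_coef_def coeff_eq_0)

lemma coeff_pcompose_x_sq_minus_x_top:
  fixes F :: "'a::idom poly"
  assumes "degree F \<le> d"
  shows "coeff (F \<circ>\<^sub>p [:0, -1, 1:]) (2 * d) = coeff F d"
proof (cases "degree F = d")
  case True
  then show ?thesis
    using lead_coeff_comp[of "[:0, -1, 1:]" F] by (simp add: degree_pcompose_x_sq_minus_x)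
next
  case False
  then show ?thesis
    using assms by (simp add: coeff_eq_0 degree_pcompose_x_sq_minus_x)
qed

lemma f_coef_odd_0:
  assumes "propR \<alpha>" and "odd n"
  shows "f_coef \<alpha> n 0 = - \<alpha> n"
  using arg_cong[OF appell_poly_odd_F_pol(1)[OF assms], of "\<lambda>p. coeff p 0"]
  by (simp add: f_coef_def coeff_appell_poly pcompose_0' poly_0_coeff_0)

lemma f_coef_odd_top:
  assumes "propR \<alpha>" and "odd n"
  shows "f_coef \<alpha> n (n div 2) = \<alpha> 0 / 2"
proof -
  let ?G = "F_pol \<alpha> n \<circ>\<^sub>p [:0, -1, 1:]"
  have n: "n = Suc (2 * (n div 2))"
    using assms(2) by presburger
  have "\<alpha> 0 = coeff (appell_poly \<alpha> n) n"
    by (simp add: coeff_appell_poly)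
  also have "\<dots> = coeff ([:-1, 2:] * ?G) (Suc (2 * (n div 2)))"
    by (simp only: appell_poly_odd_F_pol(1)[OF assms] n[symmetric])
  also have "\<dots> = 2 * coeff ?G (2 * (n div 2)) - coeff ?G (Suc (2 * (n div 2)))"
    by simp
  also have "coeff ?G (Suc (2 * (n div 2))) = 0"
    using degree_F_pol[OF assms(1), of n] by (intro coeff_eq_0) (simp add: degree_pcompose_x_sq_minus_x)
  finally show ?thesis
    by (simp add: f_coef_def coeff_pcompose_x_sq_minus_x_top degree_F_pol[OF assms(1)])
qed

lemma f_coef_even_0:
  assumes "propR \<alpha>" and "even n"
  shows "f_coef \<alpha> n 0 = \<alpha> n"
  using arg_cong[OF appell_poly_even_F_pol(1)[OF assms], of "\<lambda>p. coeff p 0"]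
  by (simp add: f_coef_def coeff_appell_poly pcompose_0' poly_0_coeff_0)

lemma f_coef_even_top:
  assumes "propR \<alpha>" and "even n"
  shows "f_coef \<alpha> n (n div 2) = \<alpha> 0"
proof -
  have "\<alpha> 0 = coeff (appell_poly \<alpha> n) (2 * (n div 2))"
    using assms(2) by (simp add: coeff_appell_poly)
  also have "\<dots> = coeff (F_pol \<alpha> n \<circ>\<^sub>p [:0, -1, 1:]) (2 * (n div 2))"
    by (simp only: appell_poly_even_F_pol(1)[OF assms])
  finally show ?thesis
    by (simp add: f_coef_def coeff_pcompose_x_sq_minus_x_top degree_F_pol[OF assms(1)])
qed

lemma pderiv_F_pol:
  assumes "propR \<alpha>" and "odd n"
  shows "pderiv (F_pol \<alpha> (Suc n)) = smult (of_nat (Suc n)) (F_pol \<alpha> n)"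
proof -
  have "even (Suc n)"
    using assms(2) by simp
  have "pderiv (appell_poly \<alpha> (Suc n)) = (pderiv (F_pol \<alpha> (Suc n)) \<circ>\<^sub>p [:0, -1, 1:]) * [:-1, 2:]"
    unfolding appell_poly_even_F_pol(1)[OF assms(1) \<open>even (Suc n)\<close>] pderiv_pcompose
    by (simp add: pderiv_pCons)
  moreover have "pderiv (appell_poly \<alpha> (Suc n)) = (smult (of_nat (Suc n)) (F_pol \<alpha> n) \<circ>\<^sub>p [:0, -1, 1:]) * [:-1, 2:]"
    unfolding pderiv_appell_poly appell_poly_odd_F_pol(1)[OF assms] pcompose_smult
    by (simp only: mult_smult_left mult_smult_right mult.commute)
  ultimately have "(pderiv (F_pol \<alpha> (Suc n)) \<circ>\<^sub>p [:0, -1, 1:]) * [:-1, 2:]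
      = (smult (of_nat (Suc n)) (F_pol \<alpha> n) \<circ>\<^sub>p [:0, -1, 1:]) * [:-1, 2:]"
    by (rule trans[OF sym])
  then have "pderiv (F_pol \<alpha> (Suc n)) \<circ>\<^sub>p [:0, -1, 1:] = smult (of_nat (Suc n)) (F_pol \<alpha> n) \<circ>\<^sub>p [:0, -1, 1:]"
    by (rule mult_right_cancel[THEN iffD1, rotated]) simp
  then show ?thesis
    by (simp only: pcompose_x_sq_minus_x_eq_iff)
qed

lemma f_coef_Suc_Suc:
  assumes "propR \<alpha>" and "odd n"
  shows "f_coef \<alpha> (Suc n) (Suc j) = of_nat (Suc n) / of_nat (Suc j) * f_coef \<alpha> n j"
  using arg_cong[OF pderiv_F_pol[OF assms], of "\<lambda>p. coeff p j"]
  by (simp add: f_coef_def coeff_pderiv field_simps del: of_nat_Suc)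

theorem mainTheorem17:
  fixes \<alpha> :: "nat \<Rightarrow> complex" and n :: nat
  assumes R: "propR \<alpha>" and odd: "odd n" and n1: "n \<ge> 1"
  shows "(\<forall>x. appell \<alpha> n x = (2 * x - 1) * poly (F_pol \<alpha> n) (x * (x - 1)))
    \<and> (\<forall>k. (-1) ^ k * f_coef \<alpha> n k = fps_nth (S_fps \<alpha> n (2 * int k)) k
             \<and> fps_nth (S_fps \<alpha> n (2 * int k)) k
                 = (deriv ^^ k) (appell_star \<alpha> n (2 * int k)) 1 / fact k)
    \<and> (\<forall>k > n div 2. \<exists>p. fps_of_poly p = S_fps \<alpha> n (2 * int k)
             \<and> (\<forall>x. x \<noteq> 0 \<longrightarrow> poly p x = - (x ^ (2 * k) * poly p (inverse x))))
    \<and> (f_coef \<alpha> n 0 = - \<alpha> n)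
    \<and> (f_coef \<alpha> n (n div 2) = \<alpha> 0 / 2)
    \<and> (\<forall>k > n div 2. f_coef \<alpha> n k = 0)
    \<and> (\<forall>k \<le> n. f_coef \<alpha> n k
             = (-1) ^ k * (\<Sum>\<nu>\<le>k. (of_int (2 * int k - int n) gchoose (k - \<nu>)) * s_coef \<alpha> n \<nu>)
           \<and> f_coef \<alpha> n k
             = (-1) ^ (k + 1) * (\<Sum>\<nu>\<le>k. of_nat ((2 * k - \<nu>) choose k) * of_nat (n choose \<nu>) * \<alpha> (n - \<nu>)))
    \<and> (\<forall>x. appell \<alpha> (n + 1) x = poly (F_pol \<alpha> (n + 1)) (x * (x - 1)))
    \<and> (f_coef \<alpha> (n + 1) 0 = \<alpha> (n + 1))
    \<and> (\<forall>k. 1 \<le> k \<and> k < (n + 1) div 2 \<longrightarrow>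
             f_coef \<alpha> (n + 1) k = of_nat (n + 1) / of_nat k * f_coef \<alpha> n (k - 1))
    \<and> (f_coef \<alpha> (n + 1) ((n + 1) div 2) = \<alpha> 0)
    \<and> (\<forall>k > (n + 1) div 2. f_coef \<alpha> (n + 1) k = 0)"
proof -
  have "even (n + 1)"
    using odd by simp
  have diag: "S_fps \<alpha> n (2 * int k) $ k = (-1) ^ k * f_coef \<alpha> n k" for k
    by (rule S_fps_diag_coeff[OF R odd])
  then have f_diag: "f_coef \<alpha> n k = (-1) ^ k * S_fps \<alpha> n (2 * int k) $ k" for k
    by simp
  show ?thesis
  proof (intro conjI allI impI)
    show "appell \<alpha> n x = (2 * x - 1) * poly (F_pol \<alpha> n) (x * (x - 1))" for x
      using arg_cong[OF appell_poly_odd_F_pol(1)[OF R odd], of "\<lambda>p. poly p x"] by (simp add: poly_pcompose algebra_simps)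
    show "appell \<alpha> (n + 1) x = poly (F_pol \<alpha> (n + 1)) (x * (x - 1))" for x
      using arg_cong[OF appell_poly_even_F_pol(1)[OF R \<open>even (n + 1)\<close>], of "\<lambda>p. poly p x"]
      by (simp add: poly_pcompose)
    show "f_coef \<alpha> (n + 1) k = of_nat (n + 1) / of_nat k * f_coef \<alpha> n (k - 1)" if "1 \<le> k \<and> k < (n + 1) div 2" for k
      using f_coef_Suc_Suc[OF R odd, of "k - 1"] that by simp
    show "(-1) ^ k * f_coef \<alpha> n k = S_fps \<alpha> n (2 * int k) $ k" for k
      by (simp add: diag)
    show "S_fps \<alpha> n (2 * int k) $ k = (deriv ^^ k) (appell_star \<alpha> n (2 * int k)) 1 / fact k" for k
      by (simp add: higher_deriv_appell_star_at_1)
    show "\<exists>p. fps_of_poly p = S_fps \<alpha> n (2 * int k)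
        \<and> (\<forall>x. x \<noteq> 0 \<longrightarrow> poly p x = - (x ^ (2 * k) * poly p (inverse x)))" if "k > n div 2" for k
      using S_fps_antipalindromic[OF R odd that] .
    show "f_coef \<alpha> n k = (-1) ^ k * (\<Sum>\<nu>\<le>k. (of_int (2 * int k - int n) gchoose (k - \<nu>)) * s_coef \<alpha> n \<nu>)" for k
      by (simp add: f_diag S_fps_nth)
    show "f_coef \<alpha> n k = (-1) ^ (k + 1) * (\<Sum>\<nu>\<le>k. of_nat ((2 * k - \<nu>) choose k) * of_nat (n choose \<nu>) * \<alpha> (n - \<nu>))" for k
      by (simp add: f_diag S_fps_diag_coeff_choose[OF R odd])
  qed (use f_coef_odd_0[OF R odd] f_coef_odd_top[OF R odd] f_coef_eq_0[OF R]
      f_coef_even_0[OF R \<open>even (n + 1)\<close>] f_coef_even_top[OF R \<open>even (n + 1)\<close>] in simp_all)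
qed

end
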